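(* The ideal $\underline{\mathfrak c}([E_z]_{\mathbb C},f_\rho):=\{\alpha\in\mathcal O_{f_z}:\alpha\,\Omega'(\Lambda^\vee)\subset\Omega'(\Lambda)\}$ equals $f_\rho\sqrt{D_z}\,i\,\mathcal O_{f_z}=f_\rho f_z\sqrt{D_K}\,\mathcal O_{f_z}$. Consequently the CM group $(\mathcal O_{f_z}/\underline{\mathfrak c})^\times$ is $(\mathcal O_{f_z}/f_\rho f_z\sqrt{D_K}\mathcal O_{f_z})^\times$, and it is the same for all elliptic curves with complex multiplication by $\mathcal O_{f_z}$ and the same $f_\rho$.
   Context: Let $z\in\mathcal H$ (upper half plane) with $a_zz^2+b_zz+c_z=0$ for coprime integers $a_z>0,b_z,c_z$; $D_z=4a_zc_z-b_z^2>0$; $K=\mathbb Q(z)$, discriminant $D_K<0$, embedded with $\sqrt{D_K}\in\mathcal H$; $D_z=|D_K|f_z^2$; $\mathcal O_{f_z}$ the order of conductor $f_z$, i.e. the ring of complex multiplications of $E_z=\mathbb C/(\mathbb Z+z\mathbb Z)$. Let $f_\rho\ge1$. $\Lambda$: lattice with basis $e_2,e_1$ and Gram matrix $f_\rho\begin{pmatrix}2a_z&b_z\\ b_z&2c_z\end{pmatrix}$, $\Lambda^\vee$ its dual in $\Lambda\otimes\mathbb Q$; $\Omega':\Lambda\otimes\mathbb Q\to\mathbb C$ the $\mathbb Q$-linear map with $\Omega'(e_2)=\sqrt{2a_zf_\rho}$, $\Omega'(e_1)=-\sqrt{2a_zf_\rho}\,z$. The CM group is $(\mathcal O_{f_z}/\underline{\mathfrak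 c})^\times$, acting on $\Lambda^\vee/\Lambda$ via multiplication on $\Omega'(\Lambda^\vee)/\Omega'(\Lambda)$. *)

theory Defs
  imports "HOL-Analysis.Analysis" "HOL-Computational_Algebra.Squarefree"
begin

text \<open>The lattice Z + zZ of the elliptic curve E_z = C/(Z + zZ).\<close>
definition lat :: "complex \<Rightarrow> complex set" where
  "lat z = {of_int m + of_int n * z | m n. True}"

text \<open>Ring of complex multiplications of E_z (the order O_{f_z}).\<close>
definition cm_order :: "complex \<Rightarrow> complex set" where
  "cm_order z = {\<alpha>. \<forall>w\<in>lat z. \<alpha> * w \<in> lat z}"

definition fund_disc :: "int \<Rightarrow> bool" where
  "fund_disc D \<longleftrightarrow> D < 0 \<and>
     ((D mod 4 = 1 \<and> squarefree D) \<or>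
      (\<exists>m. D = 4 * m \<and> (m mod 4 = 2 \<or> m mod 4 = 3) \<and> squarefree m))"

text \<open>Lambda tensor Q = Q^2 with coordinates (x2, x1) = x2 e2 + x1 e1;
  Gram matrix f_rho * [[2a, b], [b, 2c]].\<close>
definition gram :: "int \<Rightarrow> int \<Rightarrow> int \<Rightarrow> int \<Rightarrow> rat \<times> rat \<Rightarrow> rat \<times> rat \<Rightarrow> rat" where
  "gram a b c f v w = of_int f * (2 * of_int a * fst v * fst w
      + of_int b * (fst v * snd w + snd v * fst w) + 2 * of_int c * snd v * snd w)"

definition Lam :: "(rat \<times> rat) set" where
  "Lam = {(of_int m, of_int n) | m n. True}"

definition Lam_dual :: "int \<Rightarrow> int \<Rightarrow> int \<Rightarrow> int \<Rightarrow> (rat \<times> rat) set" where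
  "Lam_dual a b c f = {v. \<forall>w\<in>Lam. gram a b c f v w \<in> \<int>}"

definition Omega' :: "int \<Rightarrow> int \<Rightarrow> complex \<Rightarrow> rat \<times> rat \<Rightarrow> complex" where
  "Omega' a f z v = complex_of_real (sqrt (2 * of_int a * of_int f))
      * (of_rat (fst v) - of_rat (snd v) * z)"

definition cm_ideal :: "int \<Rightarrow> int \<Rightarrow> int \<Rightarrow> complex \<Rightarrow> int \<Rightarrow> complex set" where
  "cm_ideal a b c z f = {\<alpha> \<in> cm_order z.
      (\<lambda>x. \<alpha> * x) ` (Omega' a f z ` Lam_dual a b c f) \<subseteq> Omega' a f z ` Lam}"

definition cm_point :: "complex \<Rightarrow> int \<Rightarrow> int \<Rightarrow> int \<Rightarrow> bool" where
  "cm_point z a b c \<longleftrightarrow> Im z > 0 \<and> a > 0 \<and> gcd a (gcd b c) = 1 \<and>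
     of_int a * z^2 + of_int b * z + of_int c = 0 \<and> 4 * a * c - b^2 > 0"

end

theory Submission
  imports Defs
begin

text \<open>
  Put \<open>\<kappa> = f\<^sub>\<rho>(2 a z + b) = f\<^sub>\<rho> \<surd>D\<^sub>z i\<close> and \<open>s = \<surd>(2 a f\<^sub>\<rho>)\<close>. Expanding with
  \<open>a z\<^sup>2 + b z + c = 0\<close> gives \<open>\<kappa> \<Omega>'(v) = s (\<langle>v, e\<^sub>1\<rangle> + \<langle>v, e\<^sub>2\<rangle> z)\<close>, and since the Gram
  matrix is invertible over \<open>\<rat>\<close>, the pairings \<open>(\<langle>v, e\<^sub>1\<rangle>, \<langle>v, e\<^sub>2\<rangle>)\<close> run through all of
  \<open>\<int>\<^sup>2\<close> as \<open>v\<close> runs through \<open>\<Lambda>\<^sup>\<or>\<close>. Hence \<open>\<kappa> \<Omega>'(\<Lambda>\<^sup>\<or>) = s (\<int> + z\<int>) = \<Omega>'(\<Lambda>)\<close>, so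
  \<open>\<alpha> \<Omega>'(\<Lambda>\<^sup>\<or>) \<subseteq> \<Omega>'(\<Lambda>)\<close> says exactly that \<open>\<alpha>/\<kappa>\<close> multiplies \<open>\<int> + z\<int>\<close> into itself; as \<open>\<kappa>\<close>
  lies in the order, the ideal is \<open>\<kappa> \<O>\<^sub>f\<^sub>z\<close>. The order itself is \<open>\<int> + a z \<int>\<close>, so the imaginary
  parts of its elements form the group \<open>(\<surd>D\<^sub>z / 2) \<int>\<close>: the order determines \<open>D\<^sub>z\<close> and hence \<open>\<kappa>\<close>.
\<close>

definition multipliers :: "'a::times set \<Rightarrow> 'a set" where
  "multipliers L = {\<alpha>. \<forall>w\<in>L. \<alpha> * w \<in> L}"

lemma multipliers_mult:
  fixes \<alpha> \<beta> :: "'a::semigroup_mult"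
  assumes "\<alpha> \<in> multipliers L" "\<beta> \<in> multipliers L"
  shows "\<alpha> * \<beta> \<in> multipliers L"
  using assms by (simp add: multipliers_def mult.assoc)

lemma multiplier_ideal_eq:
  fixes \<kappa> s :: "'a::field"
  assumes "\<kappa> \<noteq> 0" "s \<noteq> 0" and A: "(\<lambda>x. \<kappa> * x) ` A = (\<lambda>w. s * w) ` L"
    and "\<kappa> \<in> multipliers L"
  shows "{\<alpha> \<in> multipliers L. (\<lambda>x. \<alpha> * x) ` A \<subseteq> (\<lambda>w. s * w) ` L} = (\<lambda>\<beta>. \<kappa> * \<beta>) ` multipliers L"
proof -
  have "(\<lambda>x. \<alpha> * x) ` A \<subseteq> (\<lambda>w. s * w) ` L \<longleftrightarrow> \<alpha> / \<kappa> \<in> multipliers L" for \<alpha>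
  proof -
    have "(\<lambda>x. \<alpha> * x) ` A = (\<lambda>y. \<alpha> / \<kappa> * y) ` (\<lambda>x. \<kappa> * x) ` A"
      using \<open>\<kappa> \<noteq> 0\<close> by (simp add: image_image)
    also have "\<dots> = (\<lambda>w. s * w) ` (\<lambda>w. \<alpha> / \<kappa> * w) ` L"
      unfolding A image_image by (simp add: mult.left_commute)
    finally show ?thesis
      using \<open>s \<noteq> 0\<close> by (auto simp: multipliers_def inj_image_subset_iff inj_on_def)
  qed
  then show ?thesis
    using assms(1,4) multipliers_mult
    by (auto simp: image_iff intro!: bexI[where x = "_ / \<kappa>"])
qed

lemma dvd_of_dvd_mult_primitive:
  fixes a b c q :: int
  assumes "gcd a (gcd b c) = 1" "a dvd q * b" "a dvd q * c"
  shows "a dvd q"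
proof -
  have "a dvd gcd (q * b) (q * c)"
    using assms(2,3) by simp
  then have "a dvd q * gcd b c"
    by (simp add: gcd_mult_left)
  moreover have "coprime a (gcd b c)"
    using assms(1) by (simp add: coprime_iff_gcd_eq_1)
  ultimately show ?thesis
    using coprime_dvd_mult_left_iff by blast
qed

lemma int_multiples_generator_unique:
  fixes r r' :: real
  assumes "r > 0" "r' > 0" and eq: "range (\<lambda>k::int. of_int k * r) = range (\<lambda>k::int. of_int k * r')"
  shows "r = r'"
proof -
  obtain k :: int where k: "r = of_int k * r'"
    using eq by (metis (mono_tags, lifting) mult_1 of_int_1 rangeE rangeI)
  obtain l :: int where l: "r' = of_int l * r"
    using eq by (metis (mono_tags, lifting) mult_1 of_int_1 rangeE rangeI)
  have "of_int (k * l) * r = 1 * r"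
    using k l by (simp add: algebra_simps)
  then have "k * l = 1"
    using \<open>r > 0\<close> by (metis mult_cancel_right2 of_int_eq_1_iff order_less_irrefl)
  moreover have "k > 0"
    using k assms(1,2) by (simp add: zero_less_mult_iff)
  ultimately show ?thesis
    using k by (simp add: pos_zmult_eq_1_iff)
qed

lemma mem_lat_iff: "w \<in> lat z \<longleftrightarrow> (\<exists>m n. w = of_int m + of_int n * z)"
  unfolding lat_def by auto

lemma lat_intI: "of_int m + of_int n * z \<in> lat z"
  unfolding mem_lat_iff by blast

lemma one_mem_lat: "1 \<in> lat z"
  unfolding mem_lat_iff by (rule exI[of _ 1], rule exI[of _ 0]) simp

lemma self_mem_lat: "z \<in> lat z"
  unfolding mem_lat_iff by (rule exI[of _ 0], rule exI[of _ 1]) simp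

lemma lat_coords_eq_iff:
  assumes "Im z \<noteq> 0"
  shows "of_int m + of_int n * z = of_int m' + of_int n' * z \<longleftrightarrow> m = m' \<and> n = n'"
  using assms by (auto simp: complex_eq_iff)

lemma cm_order_eq_multipliers: "cm_order z = multipliers (lat z)"
  by (simp add: cm_order_def multipliers_def)

lemma cm_order_elem_form:
  assumes "cm_point z a b c" "\<alpha> \<in> cm_order z"
  obtains p k where "\<alpha> = of_int p + of_int k * (of_int a * z)"
proof -
  have root: "of_int a * z^2 + of_int b * z + of_int c = 0" and "Im z > 0"
    and prim: "gcd a (gcd b c) = 1"
    using assms(1) by (auto simp: cm_point_def)
  have "\<alpha> * 1 \<in> lat z" "\<alpha> * z \<in> lat z"
    using assms(2) one_mem_lat[of z] self_mem_lat[of z] unfolding cm_order_def by blast+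
  then obtain p q m n where p: "\<alpha> = of_int p + of_int q * z" and m: "\<alpha> * z = of_int m + of_int n * z"
    by (auto simp: mem_lat_iff)
  have "of_int (a * m) + of_int (a * n) * z = of_int a * (\<alpha> * z)"
    by (simp add: m algebra_simps)
  also have "\<dots> = of_int (- q * c) + of_int (a * p - q * b) * z
      + of_int q * (of_int a * z^2 + of_int b * z + of_int c)"
    by (simp add: p algebra_simps power2_eq_square)
  finally have "of_int (a * m) + of_int (a * n) * z = of_int (- q * c) + of_int (a * p - q * b) * z"
    by (simp only: root mult_zero_right add_0_right)
  then have "a * m = - q * c" "a * n = a * p - q * b"
    using \<open>Im z > 0\<close> by (simp_all only: lat_coords_eq_iff less_irrefl simp_thms)
  then have "q * b = a * (p - n)" "q * c = a * (- m)"
    by (simp_all add: algebra_simps)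
  then have "a dvd q"
    using prim dvd_of_dvd_mult_primitive by (metis dvd_triv_left)
  then obtain k where "q = a * k"
    by (elim dvdE)
  then show ?thesis
    using that[of p k] by (simp add: p)
qed

lemma int_plus_az_mem_cm_order:
  assumes "cm_point z a b c"
  shows "of_int p + of_int q * (of_int a * z) \<in> cm_order z"
proof -
  have root: "of_int a * z^2 + of_int b * z + of_int c = 0"
    using assms by (simp add: cm_point_def)
  have "(of_int p + of_int q * (of_int a * z)) * (of_int m + of_int n * z) \<in> lat z" for m n
  proof -
    have "(of_int p + of_int q * (of_int a * z)) * (of_int m + of_int n * z)
        = of_int (p * m - q * n * c) + of_int (p * n + q * a * m - q * n * b) * z
          + of_int (q * n) * (of_int a * z^2 + of_int b * z + of_int c)"
      by (simp add: algebra_simps power2_eq_square)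
    then show ?thesis
      using lat_intI[of "p * m - q * n * c" "p * n + q * a * m - q * n * b" z]
      by (simp only: root mult_zero_right add_0_right)
  qed
  then show ?thesis
    by (auto simp: cm_order_def mem_lat_iff)
qed

lemma cm_order_eq:
  assumes "cm_point z a b c"
  shows "cm_order z = {of_int p + of_int q * (of_int a * z) | p q. True}"
  using cm_order_elem_form[OF assms] int_plus_az_mem_cm_order[OF assms] by blast

lemma cm_point_sqrt_disc:
  assumes "cm_point z a b c"
  shows "2 * of_int a * z + of_int b = \<i> * complex_of_real (sqrt (of_int (4 * a * c - b^2)))"
proof -
  define w where "w = 2 * of_int a * z + of_int b"
  have root: "of_int a * z^2 + of_int b * z + of_int c = 0" and "a > 0" "Im z > 0"
    using assms by (auto simp: cm_point_def)
  have "w^2 = 4 * of_int a * (of_int a * z^2 + of_int b * z + of_int c) + of_int (b^2 - 4 * a * c)"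
    unfolding w_def by (simp add: power2_eq_square algebra_simps)
  then have w2: "w^2 = of_int (b^2 - 4 * a * c)"
    by (simp add: root)
  have "Im w > 0"
    using \<open>a > 0\<close> \<open>Im z > 0\<close> by (simp add: w_def)
  moreover have "Re w * Im w = 0" "Re w ^ 2 - Im w ^ 2 = of_int (b^2 - 4 * a * c)"
    using arg_cong[OF w2, of Im] arg_cong[OF w2, of Re] by (auto simp: power2_eq_square)
  ultimately have "Re w = 0" "Im w ^ 2 = of_int (4 * a * c - b^2)"
    by auto
  with \<open>Im w > 0\<close> have "Im w = sqrt (of_int (4 * a * c - b^2))"
    by (auto intro: real_sqrt_unique[symmetric])
  then show ?thesis
    using \<open>Re w = 0\<close> by (simp add: w_def[symmetric] complex_eq_iff)
qed

lemma Im_az_cm_point: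
  assumes "cm_point z a b c"
  shows "Im (of_int a * z) = sqrt (of_int (4 * a * c - b^2)) / 2"
  using arg_cong[OF cm_point_sqrt_disc[OF assms], of Im] by simp

lemma Im_cm_order:
  assumes "cm_point z a b c"
  shows "Im ` cm_order z = range (\<lambda>k::int. of_int k * (sqrt (of_int (4 * a * c - b^2)) / 2))"
  unfolding cm_order_eq[OF assms] Im_az_cm_point[OF assms, symmetric] by force

lemma cm_order_determines_disc:
  assumes "cm_point z a b c" "cm_point z' a' b' c'" "cm_order z' = cm_order z"
  shows "4 * a' * c' - b'^2 = 4 * a * c - b^2"
proof -
  have "range (\<lambda>k::int. of_int k * (sqrt (of_int (4 * a' * c' - b'^2)) / 2))
      = range (\<lambda>k::int. of_int k * (sqrt (of_int (4 * a * c - b^2)) / 2))"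
    using arg_cong[OF assms(3), of "image Im"] unfolding Im_cm_order[OF assms(1)] Im_cm_order[OF assms(2)] .
  then have "sqrt (of_int (4 * a' * c' - b'^2)) / 2 = sqrt (of_int (4 * a * c - b^2)) / 2"
    using assms(1,2)
    by (intro int_multiples_generator_unique) (auto simp: cm_point_def simp del: of_int_diff)
  then show ?thesis
    by (simp del: of_int_diff)
qed

lemma Lam_intI: "(of_int m, of_int n) \<in> Lam"
  unfolding Lam_def by blast

lemma Omega'_Lam:
  "Omega' a f z ` Lam = (\<lambda>w. complex_of_real (sqrt (2 * of_int a * of_int f)) * w) ` lat z"
    (is "_ = ?s ` _")
proof (intro equalityI subsetI)
  fix x assume "x \<in> Omega' a f z ` Lam"
  then obtain m n :: int where "x = Omega' a f z (of_int m, of_int n)"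
    by (auto simp: Lam_def)
  then have "x = ?s (of_int m + of_int (- n) * z)"
    by (simp add: Omega'_def)
  then show "x \<in> ?s ` lat z"
    using lat_intI by blast
next
  fix x assume "x \<in> ?s ` lat z"
  then obtain m n where "x = ?s (of_int m + of_int n * z)"
    unfolding lat_def by blast
  then have "x = Omega' a f z (of_int m, of_int (- n))"
    by (simp add: Omega'_def of_rat_minus)
  moreover have "(of_int m, of_int (- n)) \<in> Lam"
    by (rule Lam_intI)
  ultimately show "x \<in> Omega' a f z ` Lam"
    by blast
qed

lemma gram_int_right:
  "gram a b c f v (of_int m, of_int n) = of_int m * gram a b c f v (1, 0) + of_int n * gram a b c f v (0, 1)"
  by (simp add: gram_def algebra_simps)

lemma mem_Lam_dual_iff:
  "v \<in> Lam_dual a b c f \<longleftrightarrow> gram a b c f v (1, 0) \<in> \<int> \<and> gram a b c f v (0, 1) \<in> \<int>"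
proof
  assume "v \<in> Lam_dual a b c f"
  moreover have "(1, 0) \<in> Lam" "(0, 1) \<in> Lam"
    using Lam_intI[of 1 0] Lam_intI[of 0 1] by simp_all
  ultimately show "gram a b c f v (1, 0) \<in> \<int> \<and> gram a b c f v (0, 1) \<in> \<int>"
    by (simp add: Lam_dual_def)
next
  assume "gram a b c f v (1, 0) \<in> \<int> \<and> gram a b c f v (0, 1) \<in> \<int>"
  then show "v \<in> Lam_dual a b c f"
    by (auto simp: Lam_dual_def Lam_def gram_int_right intro!: Ints_add Ints_mult)
qed

lemma gram_pairings_surj:
  assumes "f \<noteq> 0" "4 * a * c - b^2 \<noteq> 0"
  shows "\<exists>v. gram a b c f v (0, 1) = p \<and> gram a b c f v (1, 0) = q"
proof -
  define d :: rat where "d = of_int (f * (4 * a * c - b^2))"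
  have "d \<noteq> 0"
    using assms by (simp add: d_def del: of_int_diff)
  \<comment> \<open>\<open>v = G\<^sup>-\<^sup>1 (q, p)\<close> for the Gram matrix \<open>G\<close>, whose determinant is \<open>f d\<close>\<close>
  define v where "v = ((2 * of_int c * q - of_int b * p) / d, (2 * of_int a * p - of_int b * q) / d)"
  have "gram a b c f v (0, 1) = d * p / d" "gram a b c f v (1, 0) = d * q / d"
    by (simp_all add: gram_def v_def d_def add_divide_distrib diff_divide_distrib
        algebra_simps power2_eq_square)
  then show ?thesis
    using \<open>d \<noteq> 0\<close> by (intro exI[of _ v]) simp
qed

lemma disc_mult_Omega':
  assumes root: "of_int a * z^2 + of_int b * z + of_int c = 0"
  shows "of_int f * (2 * of_int a * z + of_int b) * Omega' a f z v
    = complex_of_real (sqrt (2 * of_int a * of_int f))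
        * (of_rat (gram a b c f v (0, 1)) + of_rat (gram a b c f v (1, 0)) * z)"
proof -
  have "of_int f * (2 * of_int a * z + of_int b) * Omega' a f z v
    = complex_of_real (sqrt (2 * of_int a * of_int f))
        * (of_rat (gram a b c f v (0, 1)) + of_rat (gram a b c f v (1, 0)) * z
           - 2 * of_int f * of_rat (snd v) * (of_int a * z^2 + of_int b * z + of_int c))"
    by (simp add: Omega'_def gram_def of_rat_mult of_rat_add algebra_simps power2_eq_square)
  then show ?thesis
    by (simp add: root)
qed

lemma disc_mult_Omega'_Lam_dual:
  assumes root: "of_int a * z^2 + of_int b * z + of_int c = 0"
    and "f \<noteq> 0" "4 * a * c - b^2 \<noteq> 0"
  shows "(\<lambda>x. of_int f * (2 * of_int a * z + of_int b) * x) ` Omega' a f z ` Lam_dual a b c f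
    = (\<lambda>w. complex_of_real (sqrt (2 * of_int a * of_int f)) * w) ` lat z"
    (is "?\<kappa> ` _ = ?s ` _")
proof (intro equalityI subsetI)
  fix x assume "x \<in> ?\<kappa> ` Omega' a f z ` Lam_dual a b c f"
  then obtain v where "v \<in> Lam_dual a b c f" and x: "x = ?\<kappa> (Omega' a f z v)"
    by blast
  then obtain m n where "gram a b c f v (0, 1) = of_int m" "gram a b c f v (1, 0) = of_int n"
    unfolding mem_Lam_dual_iff by (metis Ints_cases)
  moreover have "x = ?s (of_rat (gram a b c f v (0, 1)) + of_rat (gram a b c f v (1, 0)) * z)"
    unfolding x by (rule disc_mult_Omega'[OF root])
  ultimately have "x = ?s (of_int m + of_int n * z)"
    by simp
  then show "x \<in> ?s ` lat z"
    using lat_intI by blast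
next
  fix x assume "x \<in> ?s ` lat z"
  then obtain m n where x: "x = ?s (of_int m + of_int n * z)"
    unfolding lat_def by blast
  obtain v where v: "gram a b c f v (0, 1) = of_int m" "gram a b c f v (1, 0) = of_int n"
    using gram_pairings_surj[OF assms(2,3)] by blast
  then have "v \<in> Lam_dual a b c f"
    by (simp add: mem_Lam_dual_iff)
  moreover have "x = ?\<kappa> (Omega' a f z v)"
    unfolding disc_mult_Omega'[OF root] x v by simp
  ultimately show "x \<in> ?\<kappa> ` Omega' a f z ` Lam_dual a b c f"
    by blast
qed

lemma cm_ideal_eq:
  assumes cm: "cm_point z a b c" and "f \<ge> 1"
  shows "cm_ideal a b c z f =
    {of_int f * complex_of_real (sqrt (of_int (4 * a * c - b^2))) * \<i> * \<beta> | \<beta>. \<beta> \<in> cm_order z}"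
proof -
  define \<kappa> where "\<kappa> = of_int f * (2 * of_int a * z + of_int b)"
  define s where "s = complex_of_real (sqrt (2 * of_int a * of_int f))"
  have root: "of_int a * z^2 + of_int b * z + of_int c = 0" and "a > 0" "4 * a * c - b^2 > 0"
    using cm by (auto simp: cm_point_def)
  have \<kappa>_sqrt: "\<kappa> = of_int f * complex_of_real (sqrt (of_int (4 * a * c - b^2))) * \<i>"
    by (simp add: \<kappa>_def cm_point_sqrt_disc[OF cm])
  have "\<kappa> \<noteq> 0" "s \<noteq> 0"
    using \<open>f \<ge> 1\<close> \<open>a > 0\<close> \<open>4 * a * c - b^2 > 0\<close>
    by (auto simp: \<kappa>_sqrt s_def simp del: of_int_diff)
  moreover have "(\<lambda>x. \<kappa> * x) ` Omega' a f z ` Lam_dual a b c f = (\<lambda>w. s * w) ` lat z"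
    unfolding \<kappa>_def s_def using \<open>f \<ge> 1\<close> \<open>4 * a * c - b^2 > 0\<close>
    by (intro disc_mult_Omega'_Lam_dual[OF root]) auto
  moreover have "\<kappa> = of_int (f * b) + of_int (2 * f) * (of_int a * z)"
    by (simp add: \<kappa>_def algebra_simps)
  then have "\<kappa> \<in> multipliers (lat z)"
    unfolding cm_order_eq_multipliers[symmetric] cm_order_eq[OF cm] by blast
  ultimately have "cm_ideal a b c z f = (\<lambda>\<beta>. \<kappa> * \<beta>) ` cm_order z"
    unfolding cm_ideal_def cm_order_eq_multipliers Omega'_Lam s_def[symmetric]
    by (rule multiplier_ideal_eq)
  then show ?thesis
    by (auto simp: \<kappa>_sqrt)
qed

lemma sqrt_disc_conductor:
  assumes "DK < 0" "fz \<ge> 0"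
  shows "complex_of_real (sqrt (of_int (\<bar>DK\<bar> * fz^2))) * \<i> = of_int fz * csqrt (of_int DK)"
proof -
  have "csqrt (of_int DK) = \<i> * complex_of_real (sqrt \<bar>of_int DK\<bar>)"
    using \<open>DK < 0\<close> by (simp add: csqrt_of_real_nonpos)
  moreover have "sqrt (of_int (\<bar>DK\<bar> * fz^2)) = sqrt \<bar>of_int DK\<bar> * of_int fz"
    using \<open>fz \<ge> 0\<close> by (simp add: real_sqrt_mult)
  ultimately show ?thesis
    by simp
qed

theorem proposition3p1p2:
  fixes z :: complex and a b c f\<rho> :: int
  assumes "cm_point z a b c" and "f\<rho> \<ge> 1"
  shows "cm_ideal a b c z f\<rho> =
           {of_int f\<rho> * complex_of_real (sqrt (of_int (4 * a * c - b^2))) * \<i> * \<beta> | \<beta>. \<beta> \<in> cm_order z}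
       \<and> (\<forall>DK fz. fund_disc DK \<and> fz \<ge> 1 \<and> 4 * a * c - b^2 = \<bar>DK\<bar> * fz^2 \<longrightarrow>
            cm_ideal a b c z f\<rho> =
              {of_int f\<rho> * of_int fz * csqrt (of_int DK) * \<beta> | \<beta>. \<beta> \<in> cm_order z})
       \<and> (\<forall>z' a' b' c'. cm_point z' a' b' c' \<and> cm_order z' = cm_order z \<longrightarrow>
            cm_ideal a' b' c' z' f\<rho> = cm_ideal a b c z f\<rho>)"
proof (intro conjI allI impI)
  show "cm_ideal a b c z f\<rho> =
      {of_int f\<rho> * complex_of_real (sqrt (of_int (4 * a * c - b^2))) * \<i> * \<beta> | \<beta>. \<beta> \<in> cm_order z}"
    using assms by (rule cm_ideal_eq)
next
  fix DK fz :: int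
  assume "fund_disc DK \<and> fz \<ge> 1 \<and> 4 * a * c - b^2 = \<bar>DK\<bar> * fz^2"
  then have "complex_of_real (sqrt (of_int (4 * a * c - b^2))) * \<i> = of_int fz * csqrt (of_int DK)"
    using sqrt_disc_conductor[of DK fz] by (simp add: fund_disc_def)
  then show "cm_ideal a b c z f\<rho> = {of_int f\<rho> * of_int fz * csqrt (of_int DK) * \<beta> | \<beta>. \<beta> \<in> cm_order z}"
    unfolding cm_ideal_eq[OF assms] by (simp only: mult.assoc)
next
  fix z' a' b' c'
  assume "cm_point z' a' b' c' \<and> cm_order z' = cm_order z"
  then have cm': "cm_point z' a' b' c'" and order: "cm_order z' = cm_order z"
    by auto
  show "cm_ideal a' b' c' z' f\<rho> = cm_ideal a b c z f\<rho>"
    by (simp only: cm_ideal_eq[OF cm' assms(2)] cm_ideal_eq[OF assms] order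
        cm_order_determines_disc[OF assms(1) cm' order])
qed

end
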